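(* Let $m\ge1$, $N\ge1$, let $F_1,\ldots,F_m:\{0,\ldots,2^N-1\}^m\to\{0,\ldots,2^N-1\}$ be arbitrary, and let $g=(g_1,\ldots,g_m)$ be the map on the decimal representation described in the context. Then at every point, with the integer parts $x_1,\ldots,x_m$ and the first sequence terms $w_1^1,\ldots,w_m^1$ held fixed, one has $\partial g_i/\partial y_i=2^N$ and $\partial g_i/\partial y_j=0$ for $i\neq j$, so the Jacobian matrix is $J=\mathrm{diag}(2^N,\ldots,2^N)$; consequently, with $\Phi_n=J^n$ and $\mu_k(\Phi_n^T\Phi_n)$ the $k$-th eigenvalue of $\Phi_n^T\Phi_n$, every Lyapunov exponent $\lambda(y_k)=\lim_{n\to+\infty}\frac{1}{2n}\ln|\mu_k(\Phi_n^T\Phi_n)|$, $k=1,\ldots,m$, equals $N\ln 2$.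
   Context: Take $Q=0$, $P=N$, so $D=\{0,1,\ldots,2^N-1\}$, each element written with $N$ binary digits; $x\cdot y$, $x+y$, $\overline{x}$ denote bitwise AND, OR and NOT on $N$-bit strings. A state consists of sequences $w_i=w_i^1w_i^2\ldots$ with $w_i^k\in D$ ($i=1,\ldots,m$) and integers $x_1,\ldots,x_m\in D$; one iteration maps it to the state with sequences $\sigma(w_i)=w_i^2w_i^3\ldots$ and integers $x_i'=(x_i\cdot\overline{w_i^1})+(F_i(x_1,\ldots,x_m)\cdot w_i^1)$. The decimal representation of a state is $y=(y_1,\ldots,y_m)$ with $y_i=x_i+\sum_{k=1}^{\infty}w_i^k2^{-Nk}$, and the induced map is $g_i(y_1,\ldots,y_m)=(x_i\cdot\overline{w_i^1})+(F_i(x_1,\ldots,x_m)\cdot w_i^1)+2^N\sum_{k=2}^{\infty}w_i^k2^{-Nk}$, i.e. the decimal representation of the image state. Partial derivatives are taken by varying only the tail terms $w_i^k$, $k\ge2$ (so that the integer parts and the first terms $w_i^1$ stay unchanged). *)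

theory Defs
  imports Complex_Main "Jordan_Normal_Form.Char_Poly"
begin

text \<open>States: integer parts xs (list of length m, entries in D = {0..2^N-1}) and
 sequences ws (list of length m, each a sequence nat => nat whose terms w^k, k >= 1,
 lie in D; the value at index 0 is unused).\<close>

definition valid_state :: "nat \<Rightarrow> nat \<Rightarrow> nat list \<Rightarrow> (nat \<Rightarrow> nat) list \<Rightarrow> bool" where
  "valid_state N m xs ws \<longleftrightarrow> length xs = m \<and> length ws = m \<and>
     (\<forall>i<m. xs ! i < 2 ^ N \<and> (\<forall>k\<ge>1. (ws ! i) k < 2 ^ N))"

text \<open>Bitwise NOT on N-bit strings (for arguments in D).\<close>
definition bnot :: "nat \<Rightarrow> nat \<Rightarrow> nat" where
  "bnot N w = 2 ^ N - 1 - w"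

definition new_int :: "nat \<Rightarrow> (nat \<Rightarrow> nat list \<Rightarrow> nat) \<Rightarrow> nat list \<Rightarrow> (nat \<Rightarrow> nat) list \<Rightarrow> nat \<Rightarrow> nat" where
  "new_int N F xs ws i =
     Bit_Operations.or (Bit_Operations.and (xs ! i) (bnot N ((ws ! i) 1)))
                       (Bit_Operations.and (F i xs) ((ws ! i) 1))"

definition decrep :: "nat \<Rightarrow> nat list \<Rightarrow> (nat \<Rightarrow> nat) list \<Rightarrow> nat \<Rightarrow> real" where
  "decrep N xs ws i = real (xs ! i) + (\<Sum>k. real ((ws ! i) (Suc k)) / 2 ^ (N * Suc k))"

text \<open>g_i on a state: decimal representation of the image state.\<close>
definition gmap :: "nat \<Rightarrow> (nat \<Rightarrow> nat list \<Rightarrow> nat) \<Rightarrow> nat list \<Rightarrow> (nat \<Rightarrow> nat) list \<Rightarrow> nat \<Rightarrow> real" where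
  "gmap N F xs ws i = real (new_int N F xs ws i)
      + 2 ^ N * (\<Sum>k. real ((ws ! i) (k + 2)) / 2 ^ (N * (k + 2)))"

definition same_head :: "nat \<Rightarrow> nat \<Rightarrow> nat list \<Rightarrow> (nat \<Rightarrow> nat) list \<Rightarrow> (nat \<Rightarrow> nat) list \<Rightarrow> bool" where
  "same_head N m xs ws ws' \<longleftrightarrow> valid_state N m xs ws' \<and> (\<forall>i<m. (ws' ! i) 1 = (ws ! i) 1)"

definition tail_class :: "nat \<Rightarrow> nat \<Rightarrow> nat list \<Rightarrow> (nat \<Rightarrow> nat) list \<Rightarrow> (nat \<Rightarrow> real) set" where
  "tail_class N m xs ws = {y. \<exists>ws'. same_head N m xs ws ws' \<and> (\<forall>i<m. decrep N xs ws' i = y i)}"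

text \<open>The induced map g as a function of y, with integer parts and first terms fixed.\<close>
definition gfix :: "nat \<Rightarrow> nat \<Rightarrow> (nat \<Rightarrow> nat list \<Rightarrow> nat) \<Rightarrow> nat list \<Rightarrow> (nat \<Rightarrow> nat) list
     \<Rightarrow> (nat \<Rightarrow> real) \<Rightarrow> nat \<Rightarrow> real" where
  "gfix N m F xs ws y = gmap N F xs
      (SOME ws'. same_head N m xs ws ws' \<and> (\<forall>i<m. decrep N xs ws' i = y i))"

definition shift :: "(nat \<Rightarrow> real) \<Rightarrow> nat \<Rightarrow> real \<Rightarrow> nat \<Rightarrow> real" where
  "shift y j t = (\<lambda>l. if l = j then y l + t else y l)"

end

theory Submission
  imports Defs
begin

text \<open>On a tail class the integer parts and first digits are fixed, so the new integer part is
  constant, while the remaining digits of \<open>y\<^sub>i\<close> are only shifted by one place: \<open>g\<^sub>i\<close> is the affine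
  function \<open>y\<^sub>i \<mapsto> 2\<^sup>N y\<^sub>i + const\<close>. Hence \<open>J = 2\<^sup>N I\<close>, \<open>\<Phi>\<^sub>n\<^sup>T \<Phi>\<^sub>n = 2\<^sup>2\<^sup>N\<^sup>n I\<close> has the single
  eigenvalue \<open>2\<^sup>2\<^sup>N\<^sup>n\<close>, and every Lyapunov exponent is \<open>N ln 2\<close>.\<close>

lemma mult_smult_one_mat:
  "((a :: 'a :: comm_semiring_1) \<cdot>\<^sub>m 1\<^sub>m m) * (b \<cdot>\<^sub>m 1\<^sub>m m) = (a * b) \<cdot>\<^sub>m 1\<^sub>m m"
  by (rule eq_matI) (auto simp: mult.commute)

lemma pow_smult_one_mat:
  "((c :: 'a :: comm_semiring_1) \<cdot>\<^sub>m 1\<^sub>m m) ^\<^sub>m n = c ^ n \<cdot>\<^sub>m 1\<^sub>m m"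
proof (induction n)
  case 0
  show ?case by (rule eq_matI) auto
next
  case (Suc n)
  then show ?case by (simp add: mult_smult_one_mat mult.commute)
qed

lemma transpose_smult_one_mat: "transpose_mat (c \<cdot>\<^sub>m 1\<^sub>m m) = c \<cdot>\<^sub>m 1\<^sub>m m"
  by (rule eq_matI) auto

lemma eigenvalue_smult_one_mat:
  assumes "eigenvalue ((d :: 'a :: idom) \<cdot>\<^sub>m 1\<^sub>m m) \<mu>"
  shows "\<mu> = d"
proof -
  obtain v where v: "v \<in> carrier_vec m" "v \<noteq> 0\<^sub>v m" "(d \<cdot>\<^sub>m 1\<^sub>m m) *\<^sub>v v = \<mu> \<cdot>\<^sub>v v"
    using assms unfolding eigenvalue_def eigenvector_def by auto
  then obtain i where i: "i < m" "v $ i \<noteq> 0"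
    by (metis carrier_vecD eq_vecI index_zero_vec)
  have "(d \<cdot>\<^sub>m 1\<^sub>m m) *\<^sub>v v = d \<cdot>\<^sub>v v"
    using v(1) by (intro eq_vecI) auto
  then have "d * v $ i = \<mu> * v $ i"
    using v(1,3) i(1) by (metis carrier_vecD index_smult_vec(1))
  then show ?thesis using i(2) by simp
qed

lemma lyapunov_exponents_smult_one_mat:
  fixes c :: real and \<mu> :: "nat \<Rightarrow> real"
  assumes "c \<noteq> 0"
    and eig: "\<And>n. eigenvalue (transpose_mat ((c \<cdot>\<^sub>m 1\<^sub>m m) ^\<^sub>m n) * (c \<cdot>\<^sub>m 1\<^sub>m m) ^\<^sub>m n) (\<mu> n)"
  shows "(\<lambda>n. ln \<bar>\<mu> n\<bar> / (2 * real n)) \<longlonglongrightarrow> ln \<bar>c\<bar>"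
proof (rule Lim_transform_eventually[OF tendsto_const])
  have "\<mu> n = (c ^ n) ^ 2" for n
    using eig[of n] eigenvalue_smult_one_mat
    by (simp add: pow_smult_one_mat transpose_smult_one_mat mult_smult_one_mat power2_eq_square)
  then have ln_\<mu>: "ln \<bar>\<mu> n\<bar> = 2 * real n * ln \<bar>c\<bar>" for n
    using \<open>c \<noteq> 0\<close> by (simp add: power_abs ln_realpow)
  show "\<forall>\<^sub>F n in sequentially. ln \<bar>c\<bar> = ln \<bar>\<mu> n\<bar> / (2 * real n)"
    using eventually_gt_at_top[of "0::nat"] by eventually_elim (simp add: ln_\<mu>)
qed

lemma summable_digit_expansion:
  assumes "N \<ge> 1" and digits: "\<forall>k\<ge>1. w k < (2::nat) ^ N"
  shows "summable (\<lambda>k. real (w (Suc k)) / 2 ^ (N * Suc k))"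
proof (rule summable_comparison_test')
  show "summable (\<lambda>k. (1 / 2 ^ N :: real) ^ k)"
    using \<open>N \<ge> 1\<close> by (intro summable_geometric) simp
next
  fix k
  have "real (w (Suc k)) \<le> 2 ^ N"
    using digits[rule_format, of "Suc k"] by (simp add: less_imp_le flip: of_nat_less_iff)
  then have "real (w (Suc k)) / 2 ^ (N * Suc k) \<le> 2 ^ N / 2 ^ (N * Suc k)"
    by (simp add: divide_right_mono)
  also have "\<dots> = (1 / 2 ^ N) ^ k"
    by (simp add: power_add power_mult power_one_over mult.commute)
  finally show "norm (real (w (Suc k)) / 2 ^ (N * Suc k)) \<le> (1 / 2 ^ N) ^ k" by simp
qed

lemma digit_expansion_split_head:
  assumes "N \<ge> 1" and "\<forall>k\<ge>1. w k < (2::nat) ^ N"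
  shows "(\<Sum>k. real (w (Suc k)) / 2 ^ (N * Suc k))
    = real (w 1) / 2 ^ N + (\<Sum>k. real (w (k + 2)) / 2 ^ (N * (k + 2)))"
  using suminf_split_head[OF summable_digit_expansion[OF assms]] by (simp add: numeral_2_eq_2)

lemma gmap_eq_decrep:
  assumes "N \<ge> 1" and "valid_state N m xs ws" and "i < m"
  shows "gmap N F xs ws i
    = real (new_int N F xs ws i) + 2 ^ N * (decrep N xs ws i - real (xs ! i) - real ((ws ! i) 1) / 2 ^ N)"
proof -
  have digits: "\<forall>k\<ge>1. (ws ! i) k < 2 ^ N"
    using assms(2,3) by (simp add: valid_state_def)
  show ?thesis
    unfolding gmap_def decrep_def digit_expansion_split_head[OF \<open>N \<ge> 1\<close> digits]
    by (simp add: algebra_simps)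
qed

lemma new_int_cong: "(ws' ! i) 1 = (ws ! i) 1 \<Longrightarrow> new_int N F xs ws' i = new_int N F xs ws i"
  by (simp add: new_int_def)

lemma gfix_on_tail_class:
  assumes "N \<ge> 1" and "y \<in> tail_class N m xs ws" and "i < m"
  shows "gfix N m F xs ws y i
    = real (new_int N F xs ws i) + 2 ^ N * (y i - real (xs ! i) - real ((ws ! i) 1) / 2 ^ N)"
proof -
  define P where "P ws' \<longleftrightarrow> same_head N m xs ws ws' \<and> (\<forall>i<m. decrep N xs ws' i = y i)" for ws'
  obtain ws0 where "P ws0"
    using assms(2) by (auto simp: tail_class_def P_def)
  \<comment> \<open>The value does not depend on which representative \<open>SOME\<close> picks: all share \<open>xs\<close>,
    the first digits, and the coordinates of \<open>y\<close>.\<close>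
  then have "P (SOME ws'. P ws')"
    by (rule someI)
  then obtain ws' where "gfix N m F xs ws y = gmap N F xs ws'" and "P ws'"
    by (simp add: gfix_def P_def)
  then have "valid_state N m xs ws'" and "(ws' ! i) 1 = (ws ! i) 1" and "decrep N xs ws' i = y i"
    and "gfix N m F xs ws y i = gmap N F xs ws' i"
    using assms(3) by (auto simp: P_def same_head_def)
  then show ?thesis
    using assms(1,3) gmap_eq_decrep[of N m xs ws' i F] new_int_cong[of ws' i ws N F xs] by simp
qed

lemma decrep_in_tail_class: "valid_state N m xs ws \<Longrightarrow> decrep N xs ws \<in> tail_class N m xs ws"
  unfolding tail_class_def same_head_def by blast

lemma shift_zero [simp]: "shift y j 0 = y"
  by (auto simp: shift_def)

lemma gfix_shift_has_derivative:
  assumes "N \<ge> 1" and "valid_state N m xs ws" and "i < m"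
  shows "((\<lambda>t. gfix N m F xs ws (shift (decrep N xs ws) j t) i)
      has_real_derivative (if i = j then 2 ^ N else 0))
    (at 0 within {t. shift (decrep N xs ws) j t \<in> tail_class N m xs ws})"
proof -
  define y where "y = decrep N xs ws"
  define S where "S = {t. shift y j t \<in> tail_class N m xs ws}"
  define h where "h t = real (new_int N F xs ws i)
      + 2 ^ N * (shift y j t i - real (xs ! i) - real ((ws ! i) 1) / 2 ^ N)" for t
  have h_deriv: "(h has_real_derivative (if i = j then 2 ^ N else 0)) (at 0 within S)"
    unfolding h_def shift_def by (cases "i = j") (auto intro!: derivative_eq_intros)
  have S0: "0 \<in> S"
    using decrep_in_tail_class[OF assms(2)] by (simp add: S_def y_def)
  have h_eq: "h t = gfix N m F xs ws (shift y j t) i" if "t \<in> S" for t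
    using that gfix_on_tail_class[OF assms(1) _ assms(3)] by (simp add: S_def h_def)
  show ?thesis
    unfolding y_def[symmetric] S_def[symmetric]
    by (rule has_field_derivative_transform_within[OF h_deriv _ S0, where d = 1]) (simp_all add: h_eq)
qed

theorem mainTheorem5:
  fixes N m :: nat and F :: "nat \<Rightarrow> nat list \<Rightarrow> nat"
  assumes "m \<ge> 1" and "N \<ge> 1"
    and "\<forall>i<m. \<forall>xs. length xs = m \<and> (\<forall>j<m. xs ! j < 2 ^ N) \<longrightarrow> F i xs < 2 ^ N"
  shows "let J = mat m m (\<lambda>(i, j). if i = j then (2::real) ^ N else 0) in
     (\<forall>xs ws. valid_state N m xs ws \<longrightarrow> (\<forall>i<m. \<forall>j<m.
        ((\<lambda>t. gfix N m F xs ws (shift (decrep N xs ws) j t) i)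
           has_real_derivative (J $$ (i, j)))
         (at 0 within {t. shift (decrep N xs ws) j t \<in> tail_class N m xs ws})))
   \<and> (\<forall>\<mu> :: nat \<Rightarrow> real.
        (\<forall>n. eigenvalue (transpose_mat (J ^\<^sub>m n) * (J ^\<^sub>m n)) (\<mu> n)) \<longrightarrow>
        (\<lambda>n. ln \<bar>\<mu> n\<bar> / (2 * real n)) \<longlonglongrightarrow> real N * ln 2)"
proof -
  define J where "J = mat m m (\<lambda>(i, j). if i = j then (2::real) ^ N else 0)"
  have J_scalar: "J = 2 ^ N \<cdot>\<^sub>m 1\<^sub>m m"
    unfolding J_def by (rule eq_matI) auto
  have "((\<lambda>t. gfix N m F xs ws (shift (decrep N xs ws) j t) i) has_real_derivative J $$ (i, j))
      (at 0 within {t. shift (decrep N xs ws) j t \<in> tail_class N m xs ws})"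
    if "valid_state N m xs ws" and "i < m" and "j < m" for xs ws i j
    using gfix_shift_has_derivative[OF \<open>N \<ge> 1\<close> that(1,2)] that(2,3) by (simp add: J_def)
  moreover have "(\<lambda>n. ln \<bar>\<mu> n\<bar> / (2 * real n)) \<longlonglongrightarrow> real N * ln 2"
    if "\<forall>n. eigenvalue (transpose_mat (J ^\<^sub>m n) * (J ^\<^sub>m n)) (\<mu> n)" for \<mu> :: "nat \<Rightarrow> real"
    using lyapunov_exponents_smult_one_mat[of "2 ^ N" m \<mu>] that by (simp add: J_scalar ln_realpow)
  ultimately show ?thesis
    unfolding Let_def J_def[symmetric] by blast
qed

end
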